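(* Let $(X_f,G)$ be a semicocycle extension of a minimal equicontinuous system $(\mathbb{T},G)$ with $\mathbb{T}$ metrizable. Suppose that $D_f$ is countable, that $G\theta\cap D_f$ is finite for every $\theta\in\mathbb{T}$, and that $G$ acts locally almost freely on every $\theta\in D_f$. Then $(X_f,G)$ is tame.
   Context: Semicocycle setting: $G$ topological group acting jointly continuously, minimally (all orbits dense) and equicontinuously on compact Hausdorff $\mathbb{T}$; $E(\mathbb{T})$ Ellis semigroup (closure of $\{\theta\mapsto g\theta\}$ in $\mathbb{T}^{\mathbb{T}}$). $K$ compact Hausdorff; $f\colon G\theta_0\to K$ continuous with $\overline{G\theta_0}=\mathbb{T}$; $F=\overline{\operatorname{gr}f}\subseteq\mathbb{T}\times K$, $F(\theta)=\{k:(\theta,k)\in F\}$, $D_f=\{\theta:\#F(\theta)>1\}$; $\theta_1\sim\theta_2$ iff $F(\xi\theta_1)=F(\xi\theta_2)$ for all $\xi\in E(\mathbb{T})$; $f$ invariant under no rotation ($\sim$ trivial). $X_f\subseteq K^G$ is the closure of $\{\sigma^h f\}$, $f\equiv(f(g\theta_0))_g$, $\sigma^h((x_g)_g)=(x_{gh})_g$. Local almost freeness: $\operatorname{Stab}_G(\theta)=\{g:g\theta=\theta\}$; $g\overset{\theta}{\sim}g'$ iff $g,g'$ coincide on a neighbourhood of $\theta$; $G$ acts locally almost freely on $\theta$ if $\operatorname{Stab}_G(\theta)/\overset{\theta}{\sim}$ is finite. Tameness: for $A_0,A_1\subseteq X_f$, $J\subseteq G$ is an independence set if for all finite $I\subseteq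 J$ and $a\in\{0,1\}^I$, $\bigcap_{i\in I}\sigma^{i^{-1}}A_{a_i}\neq\emptyset$; $(x_0,x_1)$ is an IT-pair if every pair of neighbourhoods of $x_0,x_1$ has an infinite independence set; the system is tame iff every IT-pair has $x_0=x_1$. *)

theory Defs
  imports "HOL-Analysis.Analysis"
begin

text \<open>The acting topological group G is a type 'g of class
topological_group_add; the (possibly non-commutative) group operation is written
additively: g + h stands for gh, 0 for the identity, - g for the inverse.
The function space 'g => 'k carries the product topology (Function_Topology).\<close>

definition orbit :: "('g \<Rightarrow> 't \<Rightarrow> 't) \<Rightarrow> 't \<Rightarrow> 't set" where
  "orbit act \<theta> = range (\<lambda>g. act g \<theta>)"

definition group_action :: "('g::group_add \<Rightarrow> 't \<Rightarrow> 't) \<Rightarrow> bool" where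
  "group_action act \<longleftrightarrow> (\<forall>x. act 0 x = x) \<and> (\<forall>g h x. act (g + h) x = act g (act h x))"

definition jointly_continuous_action :: "('g::topological_space \<Rightarrow> 't::topological_space \<Rightarrow> 't) \<Rightarrow> bool" where
  "jointly_continuous_action act \<longleftrightarrow> continuous_on UNIV (\<lambda>p::'g \<times> 't. act (fst p) (snd p))"

definition minimal_action :: "('g \<Rightarrow> 't::topological_space \<Rightarrow> 't) \<Rightarrow> bool" where
  "minimal_action act \<longleftrightarrow> (\<forall>\<theta>. closure (orbit act \<theta>) = UNIV)"

definition equicontinuous_action :: "('g \<Rightarrow> 't::metric_space \<Rightarrow> 't) \<Rightarrow> bool" where
  "equicontinuous_action act \<longleftrightarrow>
     (\<forall>\<theta>. \<forall>\<epsilon>>0. \<exists>\<delta>>0. \<forall>\<theta>' g. dist \<theta> \<theta>' < \<delta> \<longrightarrow> dist (act g \<theta>) (act g \<theta>') < \<epsilon>)"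

definition ellis_semigroup :: "('g \<Rightarrow> 't::topological_space \<Rightarrow> 't) \<Rightarrow> ('t \<Rightarrow> 't) set" where
  "ellis_semigroup act = closure (range act)"

definition graph_closure :: "('g \<Rightarrow> 't \<Rightarrow> 't) \<Rightarrow> 't \<Rightarrow> ('t::topological_space \<Rightarrow> 'k::topological_space) \<Rightarrow> ('t \<times> 'k) set" where
  "graph_closure act \<theta>0 f = closure ((\<lambda>\<theta>. (\<theta>, f \<theta>)) ` orbit act \<theta>0)"

definition fiber :: "('t \<times> 'k) set \<Rightarrow> 't \<Rightarrow> 'k set" where
  "fiber F \<theta> = {k. (\<theta>, k) \<in> F}"

definition discont_set :: "('g \<Rightarrow> 't \<Rightarrow> 't) \<Rightarrow> 't \<Rightarrow> ('t::topological_space \<Rightarrow> 'k::topological_space) \<Rightarrow> 't set" where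
  "discont_set act \<theta>0 f = {\<theta>. \<exists>k1 k2. k1 \<noteq> k2 \<and> k1 \<in> fiber (graph_closure act \<theta>0 f) \<theta> \<and> k2 \<in> fiber (graph_closure act \<theta>0 f) \<theta>}"

definition rot_equiv :: "('g \<Rightarrow> 't \<Rightarrow> 't) \<Rightarrow> 't \<Rightarrow> ('t::topological_space \<Rightarrow> 'k::topological_space) \<Rightarrow> 't \<Rightarrow> 't \<Rightarrow> bool" where
  "rot_equiv act \<theta>0 f \<theta>1 \<theta>2 \<longleftrightarrow>
     (\<forall>\<xi>\<in>ellis_semigroup act. fiber (graph_closure act \<theta>0 f) (\<xi> \<theta>1) = fiber (graph_closure act \<theta>0 f) (\<xi> \<theta>2))"

definition invariant_under_no_rotation :: "('g \<Rightarrow> 't \<Rightarrow> 't) \<Rightarrow> 't \<Rightarrow> ('t::topological_space \<Rightarrow> 'k::topological_space) \<Rightarrow> bool" where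
  "invariant_under_no_rotation act \<theta>0 f \<longleftrightarrow> (\<forall>\<theta>1 \<theta>2. rot_equiv act \<theta>0 f \<theta>1 \<theta>2 \<longrightarrow> \<theta>1 = \<theta>2)"

definition shift :: "'g::plus \<Rightarrow> ('g \<Rightarrow> 'k) \<Rightarrow> ('g \<Rightarrow> 'k)" where
  "shift h x = (\<lambda>g. x (g + h))"

definition semicocycle_point :: "('g \<Rightarrow> 't \<Rightarrow> 't) \<Rightarrow> 't \<Rightarrow> ('t \<Rightarrow> 'k) \<Rightarrow> ('g \<Rightarrow> 'k)" where
  "semicocycle_point act \<theta>0 f = (\<lambda>g. f (act g \<theta>0))"

definition semicocycle_space :: "('g::plus \<Rightarrow> 't \<Rightarrow> 't) \<Rightarrow> 't \<Rightarrow> ('t \<Rightarrow> 'k::topological_space) \<Rightarrow> ('g \<Rightarrow> 'k) set" where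
  "semicocycle_space act \<theta>0 f = closure (range (\<lambda>h. shift h (semicocycle_point act \<theta>0 f)))"

definition stabilizer :: "('g \<Rightarrow> 't \<Rightarrow> 't) \<Rightarrow> 't \<Rightarrow> 'g set" where
  "stabilizer act \<theta> = {g. act g \<theta> = \<theta>}"

definition germ_rel :: "('g \<Rightarrow> 't::topological_space \<Rightarrow> 't) \<Rightarrow> 't \<Rightarrow> ('g \<times> 'g) set" where
  "germ_rel act \<theta> = {(g, g'). \<exists>U. open U \<and> \<theta> \<in> U \<and> (\<forall>x\<in>U. act g x = act g' x)}"

definition locally_almost_free_at :: "('g \<Rightarrow> 't::topological_space \<Rightarrow> 't) \<Rightarrow> 't \<Rightarrow> bool" where
  "locally_almost_free_at act \<theta> \<longleftrightarrow>
     finite (stabilizer act \<theta> // (germ_rel act \<theta> \<inter> (stabilizer act \<theta> \<times> stabilizer act \<theta>)))"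

definition independence_set :: "('g::group_add \<Rightarrow> 'k) set \<Rightarrow> ('g \<Rightarrow> 'k) set \<Rightarrow> 'g set \<Rightarrow> bool" where
  "independence_set A0 A1 J \<longleftrightarrow>
     (\<forall>I a. finite I \<longrightarrow> I \<subseteq> J \<longrightarrow>
        (\<Inter>i\<in>I. shift (- i) ` (if a i then A1 else A0)) \<noteq> {})"

definition IT_pair :: "('g::group_add \<Rightarrow> 'k::topological_space) set \<Rightarrow> ('g \<Rightarrow> 'k) \<Rightarrow> ('g \<Rightarrow> 'k) \<Rightarrow> bool" where
  "IT_pair X x0 x1 \<longleftrightarrow> x0 \<in> X \<and> x1 \<in> X \<and>
     (\<forall>U0 U1. open U0 \<longrightarrow> open U1 \<longrightarrow> x0 \<in> U0 \<longrightarrow> x1 \<in> U1 \<longrightarrow>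
        (\<exists>J. infinite J \<and> independence_set (U0 \<inter> X) (U1 \<inter> X) J))"

definition tame :: "('g::group_add \<Rightarrow> 'k::topological_space) set \<Rightarrow> bool" where
  "tame X \<longleftrightarrow> (\<forall>x0 x1. IT_pair X x0 x1 \<longrightarrow> x0 = x1)"

end

theory Submission
  imports Defs "HOL-Library.Diagonal_Subsequence"
begin

text \<open>Suppose \<open>(x0, x1)\<close> is an IT-pair with \<open>x0 g0 \<noteq> x1 g0\<close>. Neighbourhoods of these two
  values with disjoint closures \<open>V0\<close>, \<open>V1\<close> give an infinite independence set \<open>J\<close>. By
  equicontinuity, some injective sequence \<open>j n\<close> in \<open>J\<close> makes \<open>act (g0 + j n)\<close> converge pointwise
  to an injective map \<open>\<xi>\<close>, and by compactness every 0-1 sequence \<open>b\<close> is realised by some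
  \<open>y \<in> X\<^sub>f\<close> with \<open>y (g0 + j n) \<in> V\<^bsub>b n\<^esub>\<close>. Such a \<open>y\<close> lies over a point \<open>\<theta>\<close> of the
  base: \<open>y g \<in> F (g \<theta>)\<close>, and \<open>y\<close> is constant on germ classes at \<open>\<theta>\<close>. If \<open>b\<close> takes both values
  infinitely often (interleaving any sequence with its negation achieves this injectively), the fibre \<open>F (\<xi> \<theta>)\<close> meets \<open>V0\<close> and \<open>V1\<close>, so \<open>\<xi> \<theta> \<in> D\<^sub>f\<close> and only
  countably many \<open>\<theta>\<close> occur. Over a fixed \<open>\<theta>\<close>, \<open>y g\<close> is determined by \<open>F\<close> when \<open>g \<theta> \<notin> D\<^sub>f\<close>
  and by the germ class of \<open>g\<close> otherwise; finiteness of \<open>G\<theta> \<inter> D\<^sub>f\<close> and local almost freeness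
  leave finitely many such classes, hence finitely many patterns over \<open>\<theta>\<close>. This would make the
  set of 0-1 sequences countable.\<close>

lemma compact_metric_countable_dense:
  assumes "compact (UNIV :: 'a set)"
  obtains D :: "'a::metric_space set" where "countable D" "\<And>x e. e > 0 \<Longrightarrow> \<exists>d\<in>D. dist d x < e"
proof -
  have "\<forall>\<epsilon>>0. \<exists>C. finite C \<and> (UNIV :: 'a set) \<subseteq> (\<Union>c\<in>C. ball c \<epsilon>)"
    using assms unfolding compact_eq_totally_bounded by (rule conjunct2)
  then have "\<exists>C. finite C \<and> (UNIV :: 'a set) \<subseteq> (\<Union>c\<in>C. ball c (1 / real (Suc m)))" for m
    by (rule allE[of _ "1 / real (Suc m)"]) auto
  then obtain C :: "nat \<Rightarrow> 'a set" where C: "\<And>m. finite (C m)" "\<And>m. UNIV \<subseteq> (\<Union>c\<in>C m. ball c (1 / real (Suc m)))"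
    by metis
  show ?thesis
  proof
    show "countable (\<Union>m. C m)"
      using C(1) by (simp add: countable_finite)
    fix x :: 'a and e :: real
    assume "e > 0"
    then obtain m where "1 / real (Suc m) < e"
      by (rule nat_approx_posE)
    moreover obtain c where "c \<in> C m" "x \<in> ball c (1 / real (Suc m))"
      using C(2)[of m] by blast
    ultimately have "c \<in> (\<Union>m. C m)" "dist c x < e"
      by auto
    then show "\<exists>d\<in>\<Union>m. C m. dist d x < e"
      by blast
  qed
qed

lemma convergent_subseq_on_countable:
  fixes \<phi> :: "nat \<Rightarrow> 'a \<Rightarrow> 'b::metric_space"
  assumes "compact (UNIV :: 'b set)" and "countable D"
  obtains \<sigma> where "strict_mono \<sigma>" "\<And>d. d \<in> D \<Longrightarrow> convergent (\<lambda>k. \<phi> (\<sigma> k) d)"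
proof (cases "D = {}")
  case True
  then show ?thesis
    using that[of id] by (simp add: strict_mono_id)
next
  case False
  define e where "e = from_nat_into D"
  define P where "P = (\<lambda>n (s :: nat \<Rightarrow> nat). convergent (\<lambda>k. \<phi> (s k) (e n)))"
  interpret subseqs P
  proof
    fix n and s :: "nat \<Rightarrow> nat"
    have "seq_compact (UNIV :: 'b set)"
      using assms(1) compact_eq_seq_compact_metric by blast
    then obtain l r where "strict_mono r" "((\<lambda>k. \<phi> (s k) (e n)) \<circ> r) \<longlonglongrightarrow> l"
      by (meson UNIV_I seq_compactE)
    then show "\<exists>r'. strict_mono r' \<and> P n (s \<circ> r')"
      unfolding P_def convergent_def by (auto simp: o_def)
  qed
  have "convergent (\<lambda>k. \<phi> (diagseq k) (e n))" for n
  proof -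
    have "P n (diagseq \<circ> ((+) (Suc n)))"
      by (rule diagseq_holds)
        (auto simp: P_def convergent_def o_def intro: LIMSEQ_subseq_LIMSEQ[unfolded o_def])
    then show ?thesis
      unfolding P_def o_def by (subst convergent_ignore_initial_segment[symmetric, of _ "Suc n"])
        (simp add: add.commute)
  qed
  moreover have "range e = D"
    unfolding e_def using assms(2) False by (simp add: range_from_nat_into)
  ultimately show ?thesis
    using that[OF subseq_diagseq] by blast
qed

lemma equicontinuous_Cauchy_if_dense_Cauchy:
  fixes \<phi> :: "nat \<Rightarrow> 'a::metric_space \<Rightarrow> 'b::metric_space"
  assumes equi: "\<And>\<epsilon>. \<epsilon> > 0 \<Longrightarrow> \<exists>\<delta>>0. \<forall>x' n. dist x x' < \<delta> \<longrightarrow> dist (\<phi> n x) (\<phi> n x') < \<epsilon>"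
    and dense: "\<And>\<delta>. \<delta> > 0 \<Longrightarrow> \<exists>d. dist d x < \<delta> \<and> Cauchy (\<lambda>n. \<phi> n d)"
  shows "Cauchy (\<lambda>n. \<phi> n x)"
proof (rule metric_CauchyI)
  fix \<epsilon> :: real
  assume "\<epsilon> > 0"
  then obtain \<delta> where "\<delta> > 0" and \<delta>: "\<And>x' n. dist x x' < \<delta> \<Longrightarrow> dist (\<phi> n x) (\<phi> n x') < \<epsilon> / 3"
    using equi[of "\<epsilon> / 3"] by auto
  obtain d where "dist d x < \<delta>" and "Cauchy (\<lambda>n. \<phi> n d)"
    using dense[OF \<open>\<delta> > 0\<close>] by blast
  then obtain M where M: "\<And>m n. m \<ge> M \<Longrightarrow> n \<ge> M \<Longrightarrow> dist (\<phi> m d) (\<phi> n d) < \<epsilon> / 3"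
    using \<open>\<epsilon> > 0\<close> metric_CauchyD[of "\<lambda>n. \<phi> n d" "\<epsilon> / 3"] by auto
  have near: "dist (\<phi> n x) (\<phi> n d) < \<epsilon> / 3" for n
    using \<delta> \<open>dist d x < \<delta>\<close> by (simp add: dist_commute)
  have "dist (\<phi> m x) (\<phi> n x) < \<epsilon>" if "m \<ge> M" "n \<ge> M" for m n
  proof -
    have "dist (\<phi> m x) (\<phi> n x) \<le> dist (\<phi> m x) (\<phi> m d) + dist (\<phi> m d) (\<phi> n d) + dist (\<phi> n d) (\<phi> n x)"
      by (metis add.commute add_left_mono dist_triangle order_trans)
    then show ?thesis
      using near[of m] near[of n] M[OF that] by (simp add: dist_commute)
  qed
  then show "\<exists>M. \<forall>m\<ge>M. \<forall>n\<ge>M. dist (\<phi> m x) (\<phi> n x) < \<epsilon>"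
    by blast
qed

lemma equicontinuous_pointwise_convergent_subseq:
  fixes \<phi> :: "nat \<Rightarrow> 'a::metric_space \<Rightarrow> 'b::metric_space"
  assumes "compact (UNIV :: 'a set)" and "compact (UNIV :: 'b set)"
    and equi: "\<And>x \<epsilon>. \<epsilon> > 0 \<Longrightarrow> \<exists>\<delta>>0. \<forall>x' n. dist x x' < \<delta> \<longrightarrow> dist (\<phi> n x) (\<phi> n x') < \<epsilon>"
  obtains \<sigma> \<xi> where "strict_mono \<sigma>" "\<And>x. (\<lambda>k. \<phi> (\<sigma> k) x) \<longlonglongrightarrow> \<xi> x"
proof -
  obtain D :: "'a set" where "countable D" and D: "\<And>x e. e > 0 \<Longrightarrow> \<exists>d\<in>D. dist d x < e"
    using compact_metric_countable_dense[OF assms(1)] by blast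
  obtain \<sigma> where "strict_mono \<sigma>" and conv: "\<And>d. d \<in> D \<Longrightarrow> convergent (\<lambda>k. \<phi> (\<sigma> k) d)"
    using convergent_subseq_on_countable[OF assms(2) \<open>countable D\<close>] by blast
  have "Cauchy (\<lambda>k. \<phi> (\<sigma> k) x)" for x
  proof (rule equicontinuous_Cauchy_if_dense_Cauchy)
    show "\<exists>\<delta>>0. \<forall>x' k. dist x x' < \<delta> \<longrightarrow> dist (\<phi> (\<sigma> k) x) (\<phi> (\<sigma> k) x') < \<epsilon>" if "\<epsilon> > 0" for \<epsilon>
      using equi[OF that] by blast
    show "\<exists>d. dist d x < \<delta> \<and> Cauchy (\<lambda>k. \<phi> (\<sigma> k) d)" if "\<delta> > 0" for \<delta>
      using D[OF that] conv convergent_Cauchy by blast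
  qed
  moreover have "complete (UNIV :: 'b set)"
    using assms(2) by (rule compact_imp_complete)
  ultimately have "\<forall>x. \<exists>l. (\<lambda>k. \<phi> (\<sigma> k) x) \<longlonglongrightarrow> l"
    using completeE by blast
  then show ?thesis
    using that \<open>strict_mono \<sigma>\<close> by metis
qed

lemma group_action_add: "group_action act \<Longrightarrow> act g (act h x) = act (g + h) x"
  by (simp add: group_action_def)

lemma group_action_minus_cancel: "group_action act \<Longrightarrow> act (- g) (act g x) = x"
  unfolding group_action_def by (metis left_minus)

lemma jointly_continuous_action_continuous:
  assumes "jointly_continuous_action act"
  shows "continuous_on UNIV (act g)"
proof -
  have "continuous_on UNIV (\<lambda>x. act (fst (g, x)) (snd (g, x)))"
    using assms unfolding jointly_continuous_action_def
    by (rule continuous_on_compose2[of UNIV _ UNIV "\<lambda>x. (g, x)"]) (auto intro!: continuous_intros)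
  then show ?thesis
    by simp
qed

text \<open>Two points with the same limit are both moved near \<open>\<xi> a\<close> by some \<open>g k\<close>; equicontinuity at
  \<open>\<xi> a\<close> then makes \<open>- g k\<close> carry \<open>\<xi> a\<close> near both of them.\<close>

lemma equicontinuous_action_limit_inj:
  fixes act :: "'g::group_add \<Rightarrow> 't::metric_space \<Rightarrow> 't"
  assumes ga: "group_action act" and eqc: "equicontinuous_action act"
    and lim: "\<And>\<theta>. (\<lambda>k. act (g k) \<theta>) \<longlonglongrightarrow> \<xi> \<theta>"
  shows "inj \<xi>"
proof (rule injI)
  fix a b
  assume ab: "\<xi> a = \<xi> b"
  have close: "dist a b < 2 * \<epsilon>" if "\<epsilon> > 0" for \<epsilon>
  proof -
    obtain \<delta> where "\<delta> > 0" and \<delta>: "\<And>\<theta>' h. dist (\<xi> a) \<theta>' < \<delta> \<Longrightarrow> dist (act h (\<xi> a)) (act h \<theta>') < \<epsilon>"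
      using eqc \<open>\<epsilon> > 0\<close> unfolding equicontinuous_action_def by blast
    have "\<forall>\<^sub>F k in sequentially. dist (act (g k) a) (\<xi> a) < \<delta> \<and> dist (act (g k) b) (\<xi> a) < \<delta>"
      using tendstoD[OF lim \<open>\<delta> > 0\<close>, of a] tendstoD[OF lim \<open>\<delta> > 0\<close>, of b] ab
      by (auto intro: eventually_conj)
    then obtain k where "dist (act (g k) a) (\<xi> a) < \<delta>" "dist (act (g k) b) (\<xi> a) < \<delta>"
      using eventually_happens'[OF sequentially_bot] by blast
    then have "dist (act (- g k) (\<xi> a)) a < \<epsilon>" "dist (act (- g k) (\<xi> a)) b < \<epsilon>"
      using \<delta> group_action_minus_cancel[OF ga] by (metis dist_commute)+
    then show ?thesis
      using dist_triangle3[of a b "act (- g k) (\<xi> a)"] by linarith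
  qed
  show "a = b"
    using close[of "dist a b / 2"] by fastforce
qed

lemma shift_add: "shift k (shift h x) = shift (k + h) (x :: 'g::semigroup_add \<Rightarrow> 'k)"
  by (simp add: shift_def add.assoc)

lemma shift_minus_cancel: "shift i (shift (- i) x) = (x :: 'g::group_add \<Rightarrow> 'k)"
  by (simp add: shift_add shift_def)

lemma continuous_on_shift: "continuous_on UNIV (shift k :: ('g::plus \<Rightarrow> 'k::topological_space) \<Rightarrow> _)"
  unfolding shift_def by (intro continuous_on_coordinatewise_then_product continuous_on_product_coordinates)

lemma closed_vimage_shift: "closed C \<Longrightarrow> closed (shift k -` C)"
  using closed_vimage[OF _ continuous_on_shift] by blast

lemma shift_in_semicocycle_space:
  fixes act :: "'g::group_add \<Rightarrow> 't \<Rightarrow> 't" and f :: "'t \<Rightarrow> 'k::topological_space"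
  assumes "y \<in> semicocycle_space act \<theta>0 f"
  shows "shift k y \<in> semicocycle_space act \<theta>0 f"
proof -
  let ?R = "range (\<lambda>h. shift h (semicocycle_point act \<theta>0 f))"
  have "shift k ` closure ?R \<subseteq> closure ?R"
  proof (rule image_closure_subset)
    show "continuous_on (closure ?R) (shift k)"
      using continuous_on_shift continuous_on_subset by blast
    show "shift k ` ?R \<subseteq> closure ?R"
      using closure_subset by (fastforce simp: shift_add)
  qed simp
  then show ?thesis
    using assms unfolding semicocycle_space_def by blast
qed

lemma compact_UNIV_fun:
  assumes "compact (UNIV :: 'b::topological_space set)"
  shows "compact (UNIV :: ('a \<Rightarrow> 'b) set)"
proof -
  have "compact_space (euclidean :: 'b topology)"
    using assms by (simp add: compact_space_def)
  then have "compact_space (product_topology (\<lambda>i::'a. (euclidean :: 'b topology)) UNIV)"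
    by (simp add: compact_space_product_topology)
  then show ?thesis
    by (simp add: euclidean_product_topology compact_space_def)
qed

lemma compact_semicocycle_space:
  assumes "compact (UNIV :: 'k::topological_space set)"
  shows "compact (semicocycle_space act \<theta>0 (f :: 't \<Rightarrow> 'k))"
  using compact_Int_closed[OF compact_UNIV_fun[OF assms], of "semicocycle_space act \<theta>0 f"]
  unfolding semicocycle_space_def by simp

lemma compact_t2_separate_points_by_closures:
  fixes a b :: "'k::t2_space"
  assumes "compact (UNIV :: 'k set)" and "a \<noteq> b"
  obtains P0 P1 where "open P0" "open P1" "a \<in> P0" "b \<in> P1" "closure P0 \<inter> closure P1 = {}"
proof -
  have "regular_space (euclidean :: 'k topology)"
    using assms(1) hausdorff
    by (intro compact_Hausdorff_imp_regular_space) (auto simp: compact_space_def Hausdorff_space_def disjnt_def)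
  then have shrink: "\<exists>P. open P \<and> c \<in> P \<and> closure P \<subseteq> W" if "open W" "c \<in> W" for c :: 'k and W
  proof -
    have "closedin euclidean (- W)" "c \<in> topspace euclidean - (- W)"
      using that by (auto simp: closed_closedin[symmetric])
    then obtain P where "openin euclidean P" "c \<in> P" "disjnt (- W) (euclidean closure_of P)"
      using \<open>regular_space euclidean\<close> unfolding regular_space by blast
    then show ?thesis
      by (auto simp: disjnt_def)
  qed
  obtain O0 O1 where O: "open O0" "open O1" "a \<in> O0" "b \<in> O1" "O0 \<inter> O1 = {}"
    using hausdorff[OF assms(2)] by blast
  obtain P0 P1 where "open P0" "a \<in> P0" "closure P0 \<subseteq> O0" "open P1" "b \<in> P1" "closure P1 \<subseteq> O1"
    using shrink[OF O(1,3)] shrink[OF O(2,4)] by blast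
  then show ?thesis
    using that O(5) by blast
qed

definition lies_over :: "('g \<Rightarrow> 't \<Rightarrow> 't) \<Rightarrow> 't \<Rightarrow> ('t::topological_space \<Rightarrow> 'k::topological_space) \<Rightarrow> 't \<Rightarrow> ('g \<Rightarrow> 'k) \<Rightarrow> bool" where
  "lies_over act \<theta>0 f \<theta> y \<longleftrightarrow>
     (\<forall>g. (act g \<theta>, y g) \<in> graph_closure act \<theta>0 f) \<and> (\<forall>g g'. (g, g') \<in> germ_rel act \<theta> \<longrightarrow> y g = y g')"

lemma lies_over_graph_closure: "lies_over act \<theta>0 f \<theta> y \<Longrightarrow> (act g \<theta>, y g) \<in> graph_closure act \<theta>0 f"
  by (simp add: lies_over_def)

lemma lies_over_germ: "lies_over act \<theta>0 f \<theta> y \<Longrightarrow> (g, g') \<in> germ_rel act \<theta> \<Longrightarrow> y g = y g'"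
  by (simp add: lies_over_def)

lemma lies_over_eq_outside_discont_set:
  assumes "lies_over act \<theta>0 f \<theta> y" "lies_over act \<theta>0 f \<theta> y'" and "act g \<theta> \<notin> discont_set act \<theta>0 f"
  shows "y g = y' g"
proof -
  have "y g \<in> fiber (graph_closure act \<theta>0 f) (act g \<theta>)" "y' g \<in> fiber (graph_closure act \<theta>0 f) (act g \<theta>)"
    using lies_over_graph_closure[OF assms(1)] lies_over_graph_closure[OF assms(2)] unfolding fiber_def by auto
  then show ?thesis
    using assms(3) unfolding discont_set_def by blast
qed

definition orbit_cluster_point :: "('g::plus \<Rightarrow> 't \<Rightarrow> 't) \<Rightarrow> 't \<Rightarrow> ('t \<Rightarrow> 'k::topological_space) \<Rightarrow> ('g \<Rightarrow> 'k) \<Rightarrow> 't::topological_space \<Rightarrow> bool" where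
  "orbit_cluster_point act \<theta>0 f y \<theta> \<longleftrightarrow>
     (\<forall>W A. open W \<longrightarrow> y \<in> W \<longrightarrow> open A \<longrightarrow> \<theta> \<in> A \<longrightarrow>
        (\<exists>h. shift h (semicocycle_point act \<theta>0 f) \<in> W \<and> act h \<theta>0 \<in> A))"

lemma semicocycle_space_approx:
  assumes "y \<in> semicocycle_space act \<theta>0 f" and "open W" and "y \<in> W"
  obtains h where "shift h (semicocycle_point act \<theta>0 f) \<in> W"
proof -
  have "W \<inter> range (\<lambda>h. shift h (semicocycle_point act \<theta>0 f)) \<noteq> {}"
    using assms open_Int_closure_eq_empty[OF \<open>open W\<close>] unfolding semicocycle_space_def by blast
  then show ?thesis
    using that by blast
qed

lemma orbit_cluster_point_exists:
  fixes f :: "'t::topological_space \<Rightarrow> 'k::topological_space"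
  assumes "compact (UNIV :: 't set)" and y: "y \<in> semicocycle_space act \<theta>0 f"
  obtains \<theta> where "orbit_cluster_point act \<theta>0 f y \<theta>"
proof -
  define C where "C = (\<lambda>W. closure {act h \<theta>0 | h. shift h (semicocycle_point act \<theta>0 f) \<in> W})"
  define I where "I = {W. open W \<and> y \<in> W}"
  have "UNIV \<inter> (\<Inter>W\<in>I. C W) \<noteq> {}"
  proof (rule compact_imp_fip_image[OF assms(1)])
    show "\<And>W. W \<in> I \<Longrightarrow> closed (C W)"
      unfolding C_def by simp
    fix I'
    assume "finite I'" "I' \<subseteq> I"
    then have "open (\<Inter>I')" "y \<in> \<Inter>I'"
      unfolding I_def by auto
    then obtain h where h: "shift h (semicocycle_point act \<theta>0 f) \<in> \<Inter>I'"
      using semicocycle_space_approx[OF y] by blast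
    have "act h \<theta>0 \<in> C W" if "W \<in> I'" for W
    proof -
      have "act h \<theta>0 \<in> {act h \<theta>0 | h. shift h (semicocycle_point act \<theta>0 f) \<in> W}"
        using h that by blast
      then show ?thesis
        unfolding C_def by (rule closure_subset[THEN subsetD])
    qed
    then show "UNIV \<inter> (\<Inter>W\<in>I'. C W) \<noteq> {}"
      by blast
  qed
  then obtain \<theta> where "\<theta> \<in> (\<Inter>W\<in>I. C W)"
    by blast
  then have \<theta>: "\<And>W. open W \<Longrightarrow> y \<in> W \<Longrightarrow> \<theta> \<in> C W"
    unfolding I_def by blast
  have "orbit_cluster_point act \<theta>0 f y \<theta>"
    unfolding orbit_cluster_point_def
  proof (intro allI impI)
    fix W A
    assume "open W" "y \<in> W" "open A" "\<theta> \<in> A"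
    then have "A \<inter> {act h \<theta>0 | h. shift h (semicocycle_point act \<theta>0 f) \<in> W} \<noteq> {}"
      using \<theta> open_Int_closure_eq_empty[OF \<open>open A\<close>] unfolding C_def by blast
    then show "\<exists>h. shift h (semicocycle_point act \<theta>0 f) \<in> W \<and> act h \<theta>0 \<in> A"
      by blast
  qed
  then show ?thesis
    using that by blast
qed

lemma shift_semicocycle_point:
  "group_action act \<Longrightarrow> shift h (semicocycle_point act \<theta>0 f) g = f (act g (act h \<theta>0))"
  by (simp add: shift_def semicocycle_point_def group_action_add)

lemma orbit_cluster_point_graph_closure:
  fixes f :: "'t::topological_space \<Rightarrow> 'k::topological_space"
  assumes ga: "group_action act" and jc: "jointly_continuous_action act"
    and cl: "orbit_cluster_point act \<theta>0 f y \<theta>"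
  shows "(act g \<theta>, y g) \<in> graph_closure act \<theta>0 f"
proof (rule ccontr)
  let ?F = "graph_closure act \<theta>0 f"
  assume "(act g \<theta>, y g) \<notin> ?F"
  have "open (- ?F)"
    unfolding graph_closure_def by (rule open_Compl) simp
  moreover have "(act g \<theta>, y g) \<in> - ?F"
    using \<open>(act g \<theta>, y g) \<notin> ?F\<close> by simp
  ultimately obtain A B where "open A" "open B" "(act g \<theta>, y g) \<in> A \<times> B" "A \<times> B \<subseteq> - ?F"
    by (rule open_prod_elim)
  then have AB: "open A" "open B" "act g \<theta> \<in> A" "y g \<in> B" "A \<times> B \<subseteq> - ?F"
    by auto
  have "open ((\<lambda>x. x g) -` B)" "open (act g -` A)"
    using AB(1,2) jointly_continuous_action_continuous[OF jc] by (auto intro: open_vimage)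
  then obtain h where "shift h (semicocycle_point act \<theta>0 f) g \<in> B" "act g (act h \<theta>0) \<in> A"
    using cl AB(3,4) unfolding orbit_cluster_point_def by fastforce
  then have "(act g (act h \<theta>0), f (act g (act h \<theta>0))) \<in> A \<times> B"
    using shift_semicocycle_point[OF ga, of h \<theta>0 f g] by simp
  moreover have "act g (act h \<theta>0) \<in> orbit act \<theta>0"
    unfolding orbit_def using ga by (simp add: group_action_add)
  then have "(act g (act h \<theta>0), f (act g (act h \<theta>0))) \<in> ?F"
    unfolding graph_closure_def by (intro closure_subset[THEN subsetD] imageI)
  ultimately show False
    using AB(5) by (meson ComplD subsetD)
qed

lemma orbit_cluster_point_germ:
  fixes f :: "'t::topological_space \<Rightarrow> 'k::t2_space"
  assumes ga: "group_action act"
    and cl: "orbit_cluster_point act \<theta>0 f y \<theta>" and germ: "(g, g') \<in> germ_rel act \<theta>"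
  shows "y g = y g'"
proof (rule ccontr)
  assume "y g \<noteq> y g'"
  then obtain B B' where BB: "open B" "open B'" "y g \<in> B" "y g' \<in> B'" "B \<inter> B' = {}"
    using hausdorff[OF \<open>y g \<noteq> y g'\<close>] by blast
  obtain U where U: "open U" "\<theta> \<in> U" "\<And>x. x \<in> U \<Longrightarrow> act g x = act g' x"
    using germ unfolding germ_rel_def by blast
  have "open ((\<lambda>x. x g) -` B \<inter> (\<lambda>x. x g') -` B')"
    by (intro open_Int open_vimage[OF BB(1)] open_vimage[OF BB(2)]) simp_all
  then obtain h where "shift h (semicocycle_point act \<theta>0 f) g \<in> B"
      "shift h (semicocycle_point act \<theta>0 f) g' \<in> B'" "act h \<theta>0 \<in> U"
    using cl U(1,2) BB(3,4) unfolding orbit_cluster_point_def by fastforce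
  then have "f (act g (act h \<theta>0)) \<in> B" "f (act g' (act h \<theta>0)) \<in> B'" "act h \<theta>0 \<in> U"
    using shift_semicocycle_point[OF ga, of h \<theta>0 f] by simp_all
  then show False
    using BB(5) U(3) by auto
qed

lemma semicocycle_space_lies_over:
  fixes act :: "'g::{group_add, topological_space} \<Rightarrow> 't::topological_space \<Rightarrow> 't" and f :: "'t \<Rightarrow> 'k::t2_space"
  assumes "compact (UNIV :: 't set)" "group_action act" "jointly_continuous_action act"
    and "y \<in> semicocycle_space act \<theta>0 f"
  obtains \<theta> where "lies_over act \<theta>0 f \<theta> y"
proof -
  obtain \<theta> where "orbit_cluster_point act \<theta>0 f y \<theta>"
    using orbit_cluster_point_exists[OF assms(1,4)] .
  then have "lies_over act \<theta>0 f \<theta> y"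
    unfolding lies_over_def
    using orbit_cluster_point_graph_closure[OF assms(2,3)] orbit_cluster_point_germ[OF assms(2)] by blast
  then show ?thesis
    by (rule that)
qed

lemma germ_rel_equiv: "equiv S (germ_rel act \<theta> \<inter> S \<times> S)"
proof (rule equivI)
  show "refl_on S (germ_rel act \<theta> \<inter> S \<times> S)"
    unfolding refl_on_def germ_rel_def by (auto intro: exI[of _ UNIV])
  show "sym (germ_rel act \<theta> \<inter> S \<times> S)"
    unfolding sym_def germ_rel_def by fastforce
  show "trans (germ_rel act \<theta> \<inter> S \<times> S)"
  proof (rule transI)
    fix a b c
    assume "(a, b) \<in> germ_rel act \<theta> \<inter> S \<times> S" "(b, c) \<in> germ_rel act \<theta> \<inter> S \<times> S"
    then obtain U V where "open U" "\<theta> \<in> U" "\<forall>x\<in>U. act a x = act b x"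
      and "open V" "\<theta> \<in> V" "\<forall>x\<in>V. act b x = act c x" "a \<in> S" "c \<in> S"
      unfolding germ_rel_def by auto
    then show "(a, c) \<in> germ_rel act \<theta> \<inter> S \<times> S"
      unfolding germ_rel_def by (auto intro!: exI[of _ "U \<inter> V"])
  qed
qed blast

lemma germ_rel_add_right:
  assumes ga: "group_action act" and jc: "jointly_continuous_action act"
    and "(s, s') \<in> germ_rel act (act h \<theta>)"
  shows "(s + h, s' + h) \<in> germ_rel act \<theta>"
proof -
  obtain U where "open U" "act h \<theta> \<in> U" "\<forall>x\<in>U. act s x = act s' x"
    using assms(3) unfolding germ_rel_def by blast
  moreover have "open (act h -` U)"
    using \<open>open U\<close> jointly_continuous_action_continuous[OF jc] by (rule open_vimage)
  ultimately show ?thesis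
    unfolding germ_rel_def using ga by (auto simp: group_action_add[symmetric] intro!: exI[of _ "act h -` U"])
qed

lemma germ_class_from_stabilizer:
  fixes act :: "'g::{group_add, topological_space} \<Rightarrow> 't::topological_space \<Rightarrow> 't"
  assumes ga: "group_action act" and jc: "jointly_continuous_action act"
    and k: "act k \<theta> = act g \<theta>"
  defines "Stab \<equiv> stabilizer act (act g \<theta>)"
  obtains C where "C \<in> Stab // (germ_rel act (act g \<theta>) \<inter> Stab \<times> Stab)"
    and "(g, (SOME s. s \<in> C) + k) \<in> germ_rel act \<theta>" and "act ((SOME s. s \<in> C) + k) \<theta> = act g \<theta>"
proof -
  define p where "p = act g \<theta>"
  define s where "s = g + - k"
  have gs: "g = s + k"
    unfolding s_def by (simp add: add.assoc)
  have "act s p = act s (act k \<theta>)"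
    using k unfolding p_def by simp
  also have "\<dots> = p"
    using ga unfolding p_def gs by (simp add: group_action_add)
  finally have s: "s \<in> Stab"
    unfolding Stab_def stabilizer_def p_def by simp
  define C where "C = (germ_rel act p \<inter> Stab \<times> Stab) `` {s}"
  have "s \<in> C"
    unfolding C_def using s germ_rel_equiv equiv_class_self by metis
  then have "(SOME s. s \<in> C) \<in> C"
    by (rule someI)
  then have germ: "(s, SOME s. s \<in> C) \<in> germ_rel act (act k \<theta>)" and stab: "(SOME s. s \<in> C) \<in> Stab"
    unfolding C_def p_def using k by auto
  show ?thesis
  proof
    show "C \<in> Stab // (germ_rel act (act g \<theta>) \<inter> Stab \<times> Stab)"
      unfolding C_def p_def using s by (rule quotientI)
    show "(g, (SOME s. s \<in> C) + k) \<in> germ_rel act \<theta>"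
      using germ_rel_add_right[OF ga jc germ] gs by simp
    show "act ((SOME s. s \<in> C) + k) \<theta> = act g \<theta>"
      using stab ga k unfolding Stab_def stabilizer_def by (simp add: group_action_add[symmetric])
  qed
qed

text \<open>Germ classes at \<open>\<theta>\<close> of the elements moving \<open>\<theta>\<close> into \<open>D\<close> are translates of germ classes
  of stabilisers of the finitely many points of \<open>orbit act \<theta> \<inter> D\<close>.\<close>

lemma finite_germ_classes:
  fixes act :: "'g::{group_add, topological_space} \<Rightarrow> 't::topological_space \<Rightarrow> 't"
  assumes ga: "group_action act" and jc: "jointly_continuous_action act"
    and fin: "finite (orbit act \<theta> \<inter> D)"
    and laf: "\<And>p. p \<in> D \<Longrightarrow> locally_almost_free_at act p"
  defines "S \<equiv> {g. act g \<theta> \<in> D}"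
  shows "finite (S // (germ_rel act \<theta> \<inter> S \<times> S))"
proof -
  define E where "E = germ_rel act \<theta> \<inter> S \<times> S"
  define P where "P = orbit act \<theta> \<inter> D"
  define Q where "Q = (\<lambda>p. stabilizer act p // (germ_rel act p \<inter> stabilizer act p \<times> stabilizer act p))"
  have "\<forall>p\<in>P. \<exists>g. act g \<theta> = p"
    unfolding P_def orbit_def by blast
  then obtain k where k: "\<And>p. p \<in> P \<Longrightarrow> act (k p) \<theta> = p"
    by metis
  have "S // E \<subseteq> (\<lambda>(p, C). E `` {(SOME s. s \<in> C) + k p}) ` Sigma P Q"
  proof
    fix X
    assume "X \<in> S // E"
    then obtain g where g: "g \<in> S" "X = E `` {g}"
      by (rule quotientE)
    define p where "p = act g \<theta>"
    have "p \<in> P"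
      using g unfolding p_def P_def S_def orbit_def by auto
    obtain C where "C \<in> Q p" and germ: "(g, (SOME s. s \<in> C) + k p) \<in> germ_rel act \<theta>"
      and "act ((SOME s. s \<in> C) + k p) \<theta> = p"
      using germ_class_from_stabilizer[OF ga jc k[OF \<open>p \<in> P\<close>, unfolded p_def]]
      unfolding Q_def p_def by metis
    then have "(g, (SOME s. s \<in> C) + k p) \<in> E"
      using g germ \<open>p \<in> P\<close> unfolding E_def S_def P_def by simp
    then have "X = E `` {(SOME s. s \<in> C) + k p}"
      unfolding g(2) E_def by (rule equiv_class_eq[OF germ_rel_equiv])
    then show "X \<in> (\<lambda>(p, C). E `` {(SOME s. s \<in> C) + k p}) ` Sigma P Q"
      using \<open>p \<in> P\<close> \<open>C \<in> Q p\<close> by force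
  qed
  moreover have "finite (Sigma P Q)"
    using fin laf unfolding P_def Q_def locally_almost_free_at_def by (intro finite_SigmaI) auto
  ultimately show ?thesis
    unfolding E_def by (meson finite_imageI finite_subset)
qed

lemma finite_image_if_factors_through:
  assumes "finite (h ` A)" and "\<And>x x'. x \<in> A \<Longrightarrow> x' \<in> A \<Longrightarrow> h x = h x' \<Longrightarrow> t x = t x'"
  shows "finite (t ` A)"
proof -
  have "t ` A \<subseteq> (\<lambda>q. t (SOME x. x \<in> A \<and> h x = q)) ` h ` A"
  proof
    fix z
    assume "z \<in> t ` A"
    then obtain x where "x \<in> A" "z = t x"
      by blast
    define x' where "x' = (SOME x'. x' \<in> A \<and> h x' = h x)"
    have "x' \<in> A \<and> h x' = h x"
      unfolding x'_def by (rule someI[of "\<lambda>x'. x' \<in> A \<and> h x' = h x" x]) (simp add: \<open>x \<in> A\<close>)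
    then have "z = t (SOME x'. x' \<in> A \<and> h x' = h x)"
      using assms(2) \<open>x \<in> A\<close> \<open>z = t x\<close> unfolding x'_def by metis
    then show "z \<in> (\<lambda>q. t (SOME x. x \<in> A \<and> h x = q)) ` h ` A"
      using \<open>x \<in> A\<close> by (intro image_eqI[of z _ "h x"] imageI)
  qed
  then show ?thesis
    using assms(1) by (rule finite_subset[OF _ finite_imageI])
qed

lemma finite_traces_if_finite_germ_classes:
  fixes act :: "'g \<Rightarrow> 't::topological_space \<Rightarrow> 't" and f :: "'t \<Rightarrow> 'k::topological_space"
  assumes fin: "finite (S // (germ_rel act \<theta> \<inter> S \<times> S))"
    and cont: "\<And>g. g \<notin> S \<Longrightarrow> act g \<theta> \<notin> discont_set act \<theta>0 f"
  shows "finite ((\<lambda>y g. y g \<in> V) ` {y. lies_over act \<theta>0 f \<theta> y})"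
proof (rule finite_image_if_factors_through)
  define E where "E = germ_rel act \<theta> \<inter> S \<times> S"
  let ?\<Phi> = "\<lambda>y. {C \<in> S // E. \<exists>g\<in>C. y g \<in> V}"
  show "finite (?\<Phi> ` {y. lies_over act \<theta>0 f \<theta> y})"
    using fin unfolding E_def by (auto intro: finite_subset[of _ "Pow (S // _)"])
  have in_V_iff: "y g \<in> V \<longleftrightarrow> E `` {g} \<in> ?\<Phi> y" if "lies_over act \<theta>0 f \<theta> y" "g \<in> S" for y g
  proof
    have "g \<in> E `` {g}"
      unfolding E_def using germ_rel_equiv equiv_class_self that(2) by metis
    moreover have "E `` {g} \<in> S // E"
      using \<open>g \<in> S\<close> by (rule quotientI)
    moreover assume "y g \<in> V"
    ultimately show "E `` {g} \<in> ?\<Phi> y"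
      by blast
  next
    assume "E `` {g} \<in> ?\<Phi> y"
    then obtain g' where "(g, g') \<in> E" "y g' \<in> V"
      by blast
    then show "y g \<in> V"
      using lies_over_germ[OF that(1)] unfolding E_def by (metis IntD1)
  qed
  fix y y'
  assume "y \<in> {y. lies_over act \<theta>0 f \<theta> y}" "y' \<in> {y. lies_over act \<theta>0 f \<theta> y}" and "?\<Phi> y = ?\<Phi> y'"
  then have y: "lies_over act \<theta>0 f \<theta> y" "lies_over act \<theta>0 f \<theta> y'" and "?\<Phi> y = ?\<Phi> y'"
    by simp_all
  show "(\<lambda>g. y g \<in> V) = (\<lambda>g. y' g \<in> V)"
  proof
    fix g
    show "y g \<in> V \<longleftrightarrow> y' g \<in> V"
    proof (cases "g \<in> S")
      case True
      then show ?thesis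
        using in_V_iff[OF y(1)] in_V_iff[OF y(2)] \<open>?\<Phi> y = ?\<Phi> y'\<close> by simp
    next
      case False
      then show ?thesis
        using lies_over_eq_outside_discont_set[OF y cont[OF False]] by simp
    qed
  qed
qed

lemma finite_traces_over_point:
  fixes act :: "'g::{group_add, topological_space} \<Rightarrow> 't::topological_space \<Rightarrow> 't" and f :: "'t \<Rightarrow> 'k::topological_space"
  assumes "group_action act" and "jointly_continuous_action act"
    and "\<And>\<theta>. finite (orbit act \<theta> \<inter> discont_set act \<theta>0 f)"
    and "\<And>\<theta>. \<theta> \<in> discont_set act \<theta>0 f \<Longrightarrow> locally_almost_free_at act \<theta>"
  shows "finite ((\<lambda>y g. y g \<in> V) ` {y. lies_over act \<theta>0 f \<theta> y})"
proof -
  have "finite ({g. act g \<theta> \<in> discont_set act \<theta>0 f} // (germ_rel act \<theta> \<inter> {g. act g \<theta> \<in> discont_set act \<theta>0 f} \<times> {g. act g \<theta> \<in> discont_set act \<theta>0 f}))"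
    using assms(1,2) assms(3)[of \<theta>] assms(4) by (rule finite_germ_classes)
  moreover have "\<And>g. g \<notin> {g. act g \<theta> \<in> discont_set act \<theta>0 f} \<Longrightarrow> act g \<theta> \<notin> discont_set act \<theta>0 f"
    by simp
  ultimately show ?thesis
    by (rule finite_traces_if_finite_germ_classes)
qed

lemma finite_patterns_over_point:
  fixes act :: "'g::{group_add, topological_space} \<Rightarrow> 't::topological_space \<Rightarrow> 't" and f :: "'t \<Rightarrow> 'k::topological_space"
    and Y :: "'b \<Rightarrow> 'g \<Rightarrow> 'k"
  assumes "group_action act" and "jointly_continuous_action act"
    and "\<And>\<theta>. finite (orbit act \<theta> \<inter> discont_set act \<theta>0 f)"
    and "\<And>\<theta>. \<theta> \<in> discont_set act \<theta>0 f \<Longrightarrow> locally_almost_free_at act \<theta>"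
    and over: "\<And>b. lies_over act \<theta>0 f (\<Theta> b) (Y b)" and inj: "inj (\<lambda>b g. Y b g \<in> V)"
  shows "finite {b. \<Theta> b = \<theta>}"
proof -
  have "inj_on (\<lambda>b g. Y b g \<in> V) {b. \<Theta> b = \<theta>}"
    using inj by (rule inj_on_subset) simp
  moreover have "(\<lambda>b g. Y b g \<in> V) ` {b. \<Theta> b = \<theta>} \<subseteq> (\<lambda>y g. y g \<in> V) ` {y. lies_over act \<theta>0 f \<theta> y}"
    using over by blast
  moreover have "finite ((\<lambda>y g. y g \<in> V) ` {y. lies_over act \<theta>0 f \<theta> y})"
    using assms(1-4) by (rule finite_traces_over_point)
  ultimately show ?thesis
    by (rule inj_on_finite)
qed

lemma fiber_meets_frequent_values:
  fixes t :: "nat \<Rightarrow> 't::t2_space" and k :: "nat \<Rightarrow> 'k::topological_space"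
  assumes "compact (UNIV :: 't set)" and "closed F" and "compact V"
    and graph: "\<And>n. (t n, k n) \<in> F" and lim: "t \<longlonglongrightarrow> p"
    and freq: "\<exists>\<^sub>F n in sequentially. k n \<in> V"
  shows "fiber F p \<inter> V \<noteq> {}"
proof
  assume empty: "fiber F p \<inter> V = {}"
  define K where "K = fst ` (F \<inter> UNIV \<times> V)"
  have "compact (F \<inter> UNIV \<times> V)"
    using assms(2) compact_Times[OF assms(1,3)] by (rule closed_Int_compact)
  then have "open (- K)"
    unfolding K_def by (intro open_Compl compact_imp_closed compact_continuous_image continuous_intros)
  moreover have "p \<in> - K"
  proof
    assume "p \<in> K"
    then obtain v where "(p, v) \<in> F" "v \<in> V"
      unfolding K_def by force
    then show False
      using empty unfolding fiber_def by blast
  qed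
  ultimately have eventually_outside: "\<forall>\<^sub>F n in sequentially. t n \<in> - K"
    by (rule topological_tendstoD[OF lim])
  have "t n \<in> K" if "k n \<in> V" for n
    unfolding K_def using graph[of n] that by (intro image_eqI[of _ fst "(t n, k n)"]) auto
  then have "\<exists>\<^sub>F n in sequentially. t n \<in> K"
    by (rule frequently_elim1[OF freq])
  then have "\<exists>\<^sub>F n in sequentially. t n \<in> K \<and> t n \<in> - K"
    using eventually_outside by (rule frequently_eventually_frequently)
  then show False
    by simp
qed

lemma lies_over_limit_in_discont_set:
  fixes act :: "'g \<Rightarrow> 't::t2_space \<Rightarrow> 't" and f :: "'t \<Rightarrow> 'k::topological_space"
  assumes cT: "compact (UNIV :: 't set)" and cK: "compact (UNIV :: 'k set)"
    and V: "closed V0" "closed V1" "V0 \<inter> V1 = {}"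
    and y: "lies_over act \<theta>0 f \<theta> y" and lim: "(\<lambda>n. act (gs n) \<theta>) \<longlonglongrightarrow> p"
    and freq0: "\<exists>\<^sub>F n in sequentially. y (gs n) \<in> V0"
    and freq1: "\<exists>\<^sub>F n in sequentially. y (gs n) \<in> V1"
  shows "p \<in> discont_set act \<theta>0 f"
proof -
  have meets: "fiber (graph_closure act \<theta>0 f) p \<inter> V \<noteq> {}"
    if "closed V" and freq: "\<exists>\<^sub>F n in sequentially. y (gs n) \<in> V" for V
  proof (rule fiber_meets_frequent_values[OF cT _ _ _ lim freq])
    show "closed (graph_closure act \<theta>0 f)"
      unfolding graph_closure_def by simp
    show "compact V"
      using compact_Int_closed[OF cK \<open>closed V\<close>] by simp
    show "(act (gs n) \<theta>, y (gs n)) \<in> graph_closure act \<theta>0 f" for n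
      using y by (rule lies_over_graph_closure)
  qed
  obtain k0 k1 where "k0 \<in> fiber (graph_closure act \<theta>0 f) p" "k0 \<in> V0"
    and "k1 \<in> fiber (graph_closure act \<theta>0 f) p" "k1 \<in> V1"
    using meets[OF V(1) freq0] meets[OF V(2) freq1] by blast
  moreover have "k0 \<noteq> k1"
    using \<open>k0 \<in> V0\<close> \<open>k1 \<in> V1\<close> V(3) by blast
  ultimately show ?thesis
    unfolding discont_set_def by blast
qed

definition interleave :: "(nat \<Rightarrow> bool) \<Rightarrow> nat \<Rightarrow> bool" where
  "interleave b n = (if even n then b (n div 2) else \<not> b (n div 2))"

lemma inj_interleave: "inj interleave"
proof (rule injI)
  fix b b'
  assume "interleave b = interleave b'"
  then have "interleave b (2 * n) = interleave b' (2 * n)" for n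
    by simp
  then show "b = b'"
    unfolding interleave_def by auto
qed

lemma frequently_interleave: "\<exists>\<^sub>F n in sequentially. interleave b n = c"
  unfolding frequently_sequentially
proof
  fix N
  show "\<exists>n\<ge>N. interleave b n = c"
  proof (cases "b N = c")
    case True
    then show ?thesis
      by (intro exI[of _ "2 * N"]) (simp add: interleave_def)
  next
    case False
    then show ?thesis
      by (intro exI[of _ "2 * N + 1"]) (auto simp: interleave_def)
  qed
qed

lemma uncountable_UNIV_nat_bool: "uncountable (UNIV :: (nat \<Rightarrow> bool) set)"
proof
  assume "countable (UNIV :: (nat \<Rightarrow> bool) set)"
  then obtain e :: "nat \<Rightarrow> nat \<Rightarrow> bool" where "range e = UNIV"
    using uncountable_def by blast
  then obtain n where "e n = (\<lambda>m. \<not> e m m)"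
    by (metis UNIV_I imageE)
  then show False
    by metis
qed

lemma independence_set_finite_pattern:
  fixes X :: "('g::group_add \<Rightarrow> 'k) set"
  assumes indep: "independence_set (U0 \<inter> X) (U1 \<inter> X) J"
    and "finite I" "I \<subseteq> J" "I \<noteq> {}"
    and inv: "\<And>k y. y \<in> X \<Longrightarrow> shift k y \<in> X"
  shows "\<exists>z\<in>X. \<forall>i\<in>I. shift i z \<in> (if a i then U1 else U0)"
proof -
  have "(\<Inter>i\<in>I. shift (- i) ` (if a i then U1 \<inter> X else U0 \<inter> X)) \<noteq> {}"
    using indep assms(2,3) unfolding independence_set_def by blast
  then obtain z where z: "\<And>i. i \<in> I \<Longrightarrow> z \<in> shift (- i) ` (if a i then U1 \<inter> X else U0 \<inter> X)"
    by blast
  obtain i where "i \<in> I"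
    using assms(4) by blast
  then have "z \<in> X"
    using z[of i] inv by (auto split: if_splits)
  moreover have "shift i z \<in> (if a i then U1 else U0)" if "i \<in> I" for i
    using z[OF that] by (auto simp: shift_minus_cancel split: if_splits)
  ultimately show ?thesis
    by blast
qed

lemma independence_set_infinite_pattern:
  fixes X :: "('g::group_add \<Rightarrow> 'k::topological_space) set" and j :: "nat \<Rightarrow> 'g"
  assumes "compact X" and inv: "\<And>k y. y \<in> X \<Longrightarrow> shift k y \<in> X"
    and indep: "independence_set (U0 \<inter> X) (U1 \<inter> X) J"
    and "U0 \<subseteq> C0" "U1 \<subseteq> C1" "closed C0" "closed C1"
    and "inj j" "range j \<subseteq> J"
  shows "\<exists>y\<in>X. \<forall>n. shift (j n) y \<in> (if a n then C1 else C0)"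
proof -
  define C where "C = (\<lambda>n. shift (j n) -` (if a n then C1 else C0))"
  have "X \<inter> (\<Inter>n\<in>UNIV. C n) \<noteq> {}"
  proof (rule compact_imp_fip_image[OF \<open>compact X\<close>])
    show "closed (C n)" for n
      unfolding C_def using assms(6,7) by (simp add: closed_vimage_shift)
    fix I :: "nat set"
    assume "finite I"
    then obtain N where N: "\<forall>n\<in>I. n \<le> N"
      unfolding finite_nat_set_iff_bounded_le ..
    have "\<exists>z\<in>X. \<forall>i\<in>j ` {..N}. shift i z \<in> (if a (inv j i) then U1 else U0)"
      using assms(9) by (intro independence_set_finite_pattern[OF indep _ _ _ inv]) auto
    then obtain z where "z \<in> X" and z: "\<And>n. n \<le> N \<Longrightarrow> shift (j n) z \<in> (if a n then U1 else U0)"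
      using \<open>inj j\<close> by auto
    have "z \<in> C n" if "n \<in> I" for n
      using z[of n] N that assms(4,5) unfolding C_def by (auto split: if_splits)
    then show "X \<inter> (\<Inter>n\<in>I. C n) \<noteq> {}"
      using \<open>z \<in> X\<close> by blast
  qed
  then show ?thesis
    unfolding C_def by blast
qed

lemma no_independent_convergent_sequence:
  fixes act :: "'g::{group_add, topological_space} \<Rightarrow> 't::metric_space \<Rightarrow> 't"
    and f :: "'t \<Rightarrow> 'k::t2_space" and gs :: "nat \<Rightarrow> 'g" and \<xi> :: "'t \<Rightarrow> 't"
  assumes cT: "compact (UNIV :: 't set)" and cK: "compact (UNIV :: 'k set)"
    and ga: "group_action act" and jc: "jointly_continuous_action act"
    and eqc: "equicontinuous_action act"
    and cD: "countable (discont_set act \<theta>0 f)"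
    and finD: "\<And>\<theta>. finite (orbit act \<theta> \<inter> discont_set act \<theta>0 f)"
    and laf: "\<And>\<theta>. \<theta> \<in> discont_set act \<theta>0 f \<Longrightarrow> locally_almost_free_at act \<theta>"
    and V: "closed V0" "closed V1" "V0 \<inter> V1 = {}"
    and lim: "\<And>\<theta>. (\<lambda>n. act (gs n) \<theta>) \<longlonglongrightarrow> \<xi> \<theta>"
    and patterns: "\<And>b. \<exists>y\<in>semicocycle_space act \<theta>0 f. \<forall>n. y (gs n) \<in> (if b n then V1 else V0)"
  shows False
proof -
  define D where "D = discont_set act \<theta>0 f"
  have "\<forall>b. \<exists>y\<in>semicocycle_space act \<theta>0 f. \<forall>n. y (gs n) \<in> (if interleave b n then V1 else V0)"
    using patterns by blast
  then obtain Y :: "(nat \<Rightarrow> bool) \<Rightarrow> 'g \<Rightarrow> 'k" where Y: "\<And>b. Y b \<in> semicocycle_space act \<theta>0 f"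
    and Y_pattern: "\<And>b n. Y b (gs n) \<in> (if interleave b n then V1 else V0)"
    by metis
  have "\<forall>b. \<exists>\<theta>. lies_over act \<theta>0 f \<theta> (Y b)"
    using semicocycle_space_lies_over[OF cT ga jc Y] by metis
  then obtain \<Theta> :: "(nat \<Rightarrow> bool) \<Rightarrow> 't" where \<Theta>: "\<And>b. lies_over act \<theta>0 f (\<Theta> b) (Y b)"
    by metis
  have base_discont: "\<xi> (\<Theta> b) \<in> D" for b
    unfolding D_def
  proof (rule lies_over_limit_in_discont_set[OF cT cK V \<Theta> lim])
    show "\<exists>\<^sub>F n in sequentially. Y b (gs n) \<in> V0"
      using frequently_interleave[of b False] by (rule frequently_elim1) (use Y_pattern in metis)
    show "\<exists>\<^sub>F n in sequentially. Y b (gs n) \<in> V1"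
      using frequently_interleave[of b True] by (rule frequently_elim1) (use Y_pattern in metis)
  qed
  have inj_traces: "inj (\<lambda>b g. Y b g \<in> V1)"
  proof (rule injI)
    fix b b'
    assume "(\<lambda>g. Y b g \<in> V1) = (\<lambda>g. Y b' g \<in> V1)"
    moreover have "Y b (gs n) \<in> V1 \<longleftrightarrow> interleave b n" for b n
      using Y_pattern[of b n] V(3) by (auto split: if_splits)
    ultimately have "interleave b n = interleave b' n" for n
      by meson
    then show "b = b'"
      using inj_interleave by (blast dest: injD)
  qed
  have finite_over: "finite {b. \<Theta> b = \<theta>}" for \<theta>
    using ga jc finD laf \<Theta> inj_traces by (rule finite_patterns_over_point)
  have "countable {\<theta>. \<xi> \<theta> \<in> D}"
  proof (rule countable_image_inj_on)
    show "countable (\<xi> ` {\<theta>. \<xi> \<theta> \<in> D})"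
      using cD unfolding D_def by (rule countable_subset[rotated]) auto
    show "inj_on \<xi> {\<theta>. \<xi> \<theta> \<in> D}"
      using equicontinuous_action_limit_inj[OF ga eqc lim] by (rule inj_on_subset) simp
  qed
  then have "countable (\<Union>\<theta>\<in>{\<theta>. \<xi> \<theta> \<in> D}. {b. \<Theta> b = \<theta>})"
    using finite_over by (intro countable_UN) (auto intro: countable_finite)
  moreover have "(\<Union>\<theta>\<in>{\<theta>. \<xi> \<theta> \<in> D}. {b. \<Theta> b = \<theta>}) = UNIV"
    using base_discont by auto
  ultimately show False
    using uncountable_UNIV_nat_bool by simp
qed

lemma IT_pair_independent_sequence:
  fixes act :: "'g::group_add \<Rightarrow> 't \<Rightarrow> 't" and f :: "'t \<Rightarrow> 'k::topological_space"
  assumes cK: "compact (UNIV :: 'k set)" and IT: "IT_pair (semicocycle_space act \<theta>0 f) x0 x1"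
    and P: "open P0" "open P1" "x0 g0 \<in> P0" "x1 g0 \<in> P1"
  obtains J where "infinite J"
    and "\<And>(j :: nat \<Rightarrow> 'g) b. inj j \<Longrightarrow> range j \<subseteq> J \<Longrightarrow>
      \<exists>y\<in>semicocycle_space act \<theta>0 f. \<forall>n. y (g0 + j n) \<in> (if b n then closure P1 else closure P0)"
proof -
  define X where "X = semicocycle_space act \<theta>0 f"
  define U0 where "U0 = (\<lambda>x. x g0) -` P0"
  define U1 where "U1 = (\<lambda>x. x g0) -` P1"
  have "open U0"
    unfolding U0_def by (rule open_vimage[OF P(1)]) simp
  moreover have "open U1"
    unfolding U1_def by (rule open_vimage[OF P(2)]) simp
  moreover have "x0 \<in> U0" "x1 \<in> U1"
    unfolding U0_def U1_def using P(3,4) by simp_all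
  ultimately obtain J where "infinite J" and indep: "independence_set (U0 \<inter> X) (U1 \<inter> X) J"
    using IT unfolding IT_pair_def X_def by blast
  have "\<exists>y\<in>X. \<forall>n. y (g0 + j n) \<in> (if b n then closure P1 else closure P0)"
    if "inj j" "range j \<subseteq> J" for j :: "nat \<Rightarrow> 'g" and b
  proof -
    have "\<exists>y\<in>X. \<forall>n. shift (j n) y \<in> (if b n then (\<lambda>x. x g0) -` closure P1 else (\<lambda>x. x g0) -` closure P0)"
    proof (rule independence_set_infinite_pattern[OF _ _ indep _ _ _ _ that])
      show "compact X"
        unfolding X_def using cK by (rule compact_semicocycle_space)
      show "shift k y \<in> X" if "y \<in> X" for k y
        using that unfolding X_def by (rule shift_in_semicocycle_space)
      show "U0 \<subseteq> (\<lambda>x. x g0) -` closure P0" "U1 \<subseteq> (\<lambda>x. x g0) -` closure P1"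
        unfolding U0_def U1_def using closure_subset by blast+
      show "closed ((\<lambda>x. x g0) -` closure P0)" "closed ((\<lambda>x. x g0) -` closure P1)"
        by (rule closed_vimage, simp, simp)+
    qed
    then obtain y where "y \<in> X"
      and y: "\<And>n. shift (j n) y \<in> (if b n then (\<lambda>x. x g0) -` closure P1 else (\<lambda>x. x g0) -` closure P0)"
      by blast
    have "y (g0 + j n) \<in> (if b n then closure P1 else closure P0)" for n
      using y[of n] by (cases "b n") (simp_all add: shift_def)
    then show ?thesis
      using \<open>y \<in> X\<close> by blast
  qed
  then show ?thesis
    using that \<open>infinite J\<close> unfolding X_def by blast
qed

lemma IT_pair_semicocycle_space_eq:
  fixes act :: "'g::{group_add, topological_space} \<Rightarrow> 't::metric_space \<Rightarrow> 't" and f :: "'t \<Rightarrow> 'k::t2_space"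
  assumes cT: "compact (UNIV :: 't set)" and cK: "compact (UNIV :: 'k set)"
    and ga: "group_action act" and jc: "jointly_continuous_action act"
    and eqc: "equicontinuous_action act"
    and cD: "countable (discont_set act \<theta>0 f)"
    and finD: "\<And>\<theta>. finite (orbit act \<theta> \<inter> discont_set act \<theta>0 f)"
    and laf: "\<And>\<theta>. \<theta> \<in> discont_set act \<theta>0 f \<Longrightarrow> locally_almost_free_at act \<theta>"
    and IT: "IT_pair (semicocycle_space act \<theta>0 f) x0 x1"
  shows "x0 = x1"
proof (rule ccontr)
  assume "x0 \<noteq> x1"
  then obtain g0 where "x0 g0 \<noteq> x1 g0"
    by auto
  then obtain P0 P1 where P: "open P0" "open P1" "x0 g0 \<in> P0" "x1 g0 \<in> P1"
    and disjoint: "closure P0 \<inter> closure P1 = {}"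
    using compact_t2_separate_points_by_closures[OF cK] by metis
  obtain J where "infinite J" and patterns: "\<And>(j :: nat \<Rightarrow> 'g) b. inj j \<Longrightarrow> range j \<subseteq> J \<Longrightarrow>
      \<exists>y\<in>semicocycle_space act \<theta>0 f. \<forall>n. y (g0 + j n) \<in> (if b n then closure P1 else closure P0)"
    by (rule IT_pair_independent_sequence[OF cK IT P]) auto
  obtain i :: "nat \<Rightarrow> 'g" where i: "inj i" "range i \<subseteq> J"
    using infinite_countable_subset[OF \<open>infinite J\<close>] by blast
  have equi: "\<exists>\<delta>>0. \<forall>\<theta>' n. dist \<theta> \<theta>' < \<delta> \<longrightarrow> dist (act (g0 + i n) \<theta>) (act (g0 + i n) \<theta>') < \<epsilon>"
    if "\<epsilon> > 0" for \<theta> \<epsilon>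
    using eqc that unfolding equicontinuous_action_def by blast
  obtain \<sigma> and \<xi> :: "'t \<Rightarrow> 't"
    where \<sigma>: "strict_mono \<sigma>" and lim: "\<And>\<theta>. (\<lambda>n. act (g0 + i (\<sigma> n)) \<theta>) \<longlonglongrightarrow> \<xi> \<theta>"
    by (rule equicontinuous_pointwise_convergent_subseq[OF cT cT equi]) auto
  have "inj (i \<circ> \<sigma>)" "range (i \<circ> \<sigma>) \<subseteq> J"
    using i \<sigma> strict_mono_imp_inj_on by (auto intro: inj_compose)
  show False
  proof (rule no_independent_convergent_sequence[OF cT cK ga jc eqc cD finD laf])
    show "closed (closure P0)" "closed (closure P1)" "closure P0 \<inter> closure P1 = {}"
      using disjoint by simp_all
    show "(\<lambda>n. act (g0 + (i \<circ> \<sigma>) n) \<theta>) \<longlonglongrightarrow> \<xi> \<theta>" for \<theta>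
      using lim by simp
    show "\<exists>y\<in>semicocycle_space act \<theta>0 f. \<forall>n. y (g0 + (i \<circ> \<sigma>) n) \<in> (if b n then closure P1 else closure P0)" for b
      using patterns[OF \<open>inj (i \<circ> \<sigma>)\<close> \<open>range (i \<circ> \<sigma>) \<subseteq> J\<close>] .
  qed
qed

theorem mainTheorem10:
  fixes act :: "'g::topological_group_add \<Rightarrow> 't::metric_space \<Rightarrow> 't"
    and \<theta>0 :: 't
    and f :: "'t \<Rightarrow> 'k::t2_space"
  assumes "compact (UNIV :: 't set)"
    and "compact (UNIV :: 'k set)"
    and "group_action act"
    and "jointly_continuous_action act"
    and "minimal_action act"
    and "equicontinuous_action act"
    and "continuous_on (orbit act \<theta>0) f"
    and "closure (orbit act \<theta>0) = UNIV"
    and "invariant_under_no_rotation act \<theta>0 f"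
    and "countable (discont_set act \<theta>0 f)"
    and "\<And>\<theta>. finite (orbit act \<theta> \<inter> discont_set act \<theta>0 f)"
    and "\<And>\<theta>. \<theta> \<in> discont_set act \<theta>0 f \<Longrightarrow> locally_almost_free_at act \<theta>"
  shows "tame (semicocycle_space act \<theta>0 f)"
  unfolding tame_def
  using IT_pair_semicocycle_space_eq[OF assms(1-4,6) assms(10-12)] by blast

end
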